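(* Let $m\ge1$, let $S\le G_{m,m}$ be the stabilizer of $(0,0,\dots,0)\in H_{2m+1}$ under the right action $\pi$ described below, and let $\widehat K_m\to K_{m,m}$ be the finite covering space of the presentation complex $K_{m,m}$ corresponding to $S$. Then $\widehat K_m$ cellularly embeds into the $2$–skeleton of $\mathcal T_{2m+1}$.
   Context: $G_{m,m}=\langle a_1,\dots,a_{2m+1}\mid [a_i,a_{i+1}]=1\ (1\le i\le m),\ a_{m+j+1}^{-1}a_ja_{m+j+1}=a_{m+j}\ (1\le j\le m)\rangle$; $K_{m,m}$ is its presentation $2$–complex (one $0$–cell, $2m+1$ loops, $2m$ squares); $G_{m,k}$ denotes the subgroup generated by $a_1,\dots,a_{m+k+1}$. Let $H_n=\{0,1\}^n$, identified with a subset of $H_{n+1}$ by appending $0$; $H_n^*\subset H_{n+1}$ the tuples with last coordinate $1$. Let $\beta_i$ flip the $i$-th coordinate and $\varphi_{k,m+k}$ swap the $k$-th and $(m+k)$-th coordinates. The right action $\pi$ ($\pi(gh)=\pi(h)\pi(g)$) of $G_{m,m}$ on $H_{2m+1}$ is defined inductively: $\pi(a_i)=\beta_i$ on $H_{m+1}$ for $i\le m+1$; for $k=1,\dots,m$, $\pi(a_{m+k+1})=\beta_{m+k+1}$ on $H_{m+k+1}$ and, for $j\le m+k$, $\pi(a_j)|_{H^*_{m+k}}=\beta_{m+k+1}\circ\varphi_{k,m+k}\circ\pi(a_j)|_{H_{m+k}}\circ\varphi_{k,m+k}\circ\beta_{m+k+1}$; this is a well-defined transitive right action. $C_2=\mathbb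 R/2\mathbb Z$ has $0$–cells $0,1$ and $1$–cells $[0,1]$, $[1,2]$; $\mathcal T_n=(\mathbb R/2\mathbb Z)^n$ has the product CW (cube) structure, with $0$–skeleton $H_n$. *)

theory Defs
  imports Main
begin

text \<open>A tuple in H_n = {0,1}^n is a function nat => bool which is False outside
  the coordinates 1..n (True = 1). Appending 0 is then literally the inclusion
  H_n in H_(n+1).\<close>

definition Hcube :: "nat \<Rightarrow> (nat \<Rightarrow> bool) set" where
  "Hcube n = {x. \<forall>k. x k \<longrightarrow> 1 \<le> k \<and> k \<le> n}"

definition zero_tuple :: "nat \<Rightarrow> bool" where
  "zero_tuple = (\<lambda>_. False)"

definition flip :: "nat \<Rightarrow> (nat \<Rightarrow> bool) \<Rightarrow> (nat \<Rightarrow> bool)" where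
  "flip i x = x(i := \<not> x i)"

definition swapc :: "nat \<Rightarrow> nat \<Rightarrow> (nat \<Rightarrow> bool) \<Rightarrow> (nat \<Rightarrow> bool)" where
  "swapc i j x = x(i := x j, j := x i)"

text \<open>pi_stage m k j is the permutation pi(a_j) of H_{m+k+1} (for j <= m+k+1),
  defined by the paper's induction on k; stage 0 is pi(a_i) = beta_i on H_{m+1}.\<close>

fun pi_stage :: "nat \<Rightarrow> nat \<Rightarrow> nat \<Rightarrow> (nat \<Rightarrow> bool) \<Rightarrow> (nat \<Rightarrow> bool)" where
  "pi_stage m 0 j x = flip j x"
| "pi_stage m (Suc k) j x =
     (let n = m + Suc k + 1 in
      if j = n then flip n x
      else if \<not> x n then pi_stage m k j x
      else flip n (swapc (Suc k) (m + Suc k)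
                 (pi_stage m k j (swapc (Suc k) (m + Suc k) (flip n x)))))"

text \<open>pi(a_j) on H_{2m+1}, 1 <= j <= 2m+1; right action: x . a_j = pi_act m j x.\<close>
definition pi_act :: "nat \<Rightarrow> nat \<Rightarrow> (nat \<Rightarrow> bool) \<Rightarrow> (nat \<Rightarrow> bool)" where
  "pi_act m j x = pi_stage m m j x"

definition pi_act_inv :: "nat \<Rightarrow> nat \<Rightarrow> (nat \<Rightarrow> bool) \<Rightarrow> (nat \<Rightarrow> bool)" where
  "pi_act_inv m j y = (THE x. x \<in> Hcube (2*m+1) \<and> pi_act m j x = y)"

text \<open>A 2-complex: 0-cells, oriented 1-cells with source and target, and 2-cells
  whose attaching map is a closed edge path, given as a list of (edge, forward?).\<close>

record ('v, 'e, 'f) cx2 =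
  verts :: "'v set"
  edges :: "'e set"
  faces :: "'f set"
  esrc :: "'e \<Rightarrow> 'v"
  etgt :: "'e \<Rightarrow> 'v"
  fbdry :: "'f \<Rightarrow> ('e \<times> bool) list"

definition rev_path :: "('e \<times> bool) list \<Rightarrow> ('e \<times> bool) list" where
  "rev_path p = rev (map (\<lambda>(e, d). (e, \<not> d)) p)"

text \<open>A cellular embedding: injective maps on 0-, 1- and 2-cells into the cells of
  the target, each 1-cell mapped onto a 1-cell compatibly with its endpoints
  (sigma e records whether the orientation is preserved), each 2-cell mapped onto
  a 2-cell whose attaching path is the image path up to cyclic rotation and
  reversal.\<close>

definition cellular_embedding ::
  "('v, 'e, 'f) cx2 \<Rightarrow> ('w, 'd, 'g) cx2 \<Rightarrow> ('v \<Rightarrow> 'w) \<Rightarrow> ('e \<Rightarrow> 'd) \<Rightarrow> ('f \<Rightarrow> 'g)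
     \<Rightarrow> ('e \<Rightarrow> bool) \<Rightarrow> bool" where
  "cellular_embedding K L f0 f1 f2 \<sigma> \<longleftrightarrow>
     f0 ` verts K \<subseteq> verts L \<and> inj_on f0 (verts K) \<and>
     f1 ` edges K \<subseteq> edges L \<and> inj_on f1 (edges K) \<and>
     f2 ` faces K \<subseteq> faces L \<and> inj_on f2 (faces K) \<and>
     (\<forall>e \<in> edges K.
        (\<sigma> e \<and> esrc L (f1 e) = f0 (esrc K e) \<and> etgt L (f1 e) = f0 (etgt K e)) \<or>
        (\<not> \<sigma> e \<and> esrc L (f1 e) = f0 (etgt K e) \<and> etgt L (f1 e) = f0 (esrc K e))) \<and>
     (\<forall>F \<in> faces K. \<exists>k.
        fbdry L (f2 F) = rotate k (map (\<lambda>(e, d). (f1 e, d = \<sigma> e)) (fbdry K F)) \<or>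
        fbdry L (f2 F) = rotate k (rev_path (map (\<lambda>(e, d). (f1 e, d = \<sigma> e)) (fbdry K F))))"

definition cellularly_embeds :: "('v, 'e, 'f) cx2 \<Rightarrow> ('w, 'd, 'g) cx2 \<Rightarrow> bool" where
  "cellularly_embeds K L \<longleftrightarrow> (\<exists>f0 f1 f2 \<sigma>. cellular_embedding K L f0 f1 f2 \<sigma>)"

text \<open>Letters: (j, True) = a_j, (j, False) = a_j^{-1}. Relators indexed by
  r = 1..2m: r = i <= m gives [a_i,a_{i+1}] = a_i^{-1} a_{i+1}^{-1} a_i a_{i+1};
  r = m+j gives a_{m+j+1}^{-1} a_j a_{m+j+1} a_{m+j}^{-1}.\<close>

definition relator :: "nat \<Rightarrow> nat \<Rightarrow> (nat \<times> bool) list" where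
  "relator m r =
     (if r \<le> m then [(r, False), (r+1, False), (r, True), (r+1, True)]
      else (let j = r - m in [(m+j+1, False), (j, True), (m+j+1, True), (m+j, False)]))"

fun lift_word :: "nat \<Rightarrow> (nat \<Rightarrow> bool) \<Rightarrow> (nat \<times> bool) list
                   \<Rightarrow> (((nat \<Rightarrow> bool) \<times> nat) \<times> bool) list" where
  "lift_word m x [] = []"
| "lift_word m x ((j, s) # w) =
     (if s then ((x, j), True) # lift_word m (pi_act m j x) w
      else (let y = pi_act_inv m j x in ((y, j), False) # lift_word m y w))"

text \<open>The orbit of (0,...,0) under the generators; its points correspond to the
  cosets S\G (S = stabilizer of (0,...,0)) via Sg |-> (0,...,0) . g.\<close>
definition orbit0 :: "nat \<Rightarrow> (nat \<Rightarrow> bool) set" where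
  "orbit0 m = {y. (zero_tuple, y) \<in>
     {(x, z). x \<in> Hcube (2*m+1) \<and> z \<in> Hcube (2*m+1) \<and>
        (\<exists>j. 1 \<le> j \<and> j \<le> 2*m+1 \<and> (z = pi_act m j x \<or> x = pi_act m j z))}\<^sup>*}"

text \<open>The covering complex hat K_m of K_{m,m} corresponding to S: 0-cells the
  cosets S\G, a lift (x, j) of the loop a_j at each 0-cell x (from x to x . a_j),
  and a lift (x, r) of each 2-cell r at each 0-cell x, attached along the lift of
  the relator starting at x.\<close>
definition Khat :: "nat \<Rightarrow> (nat \<Rightarrow> bool, (nat \<Rightarrow> bool) \<times> nat, (nat \<Rightarrow> bool) \<times> nat) cx2" where
  "Khat m = \<lparr> verts = orbit0 m,
             edges = {(x, j). x \<in> orbit0 m \<and> 1 \<le> j \<and> j \<le> 2*m+1},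
             faces = {(x, r). x \<in> orbit0 m \<and> 1 \<le> r \<and> r \<le> 2*m},
             esrc = (\<lambda>(x, j). x),
             etgt = (\<lambda>(x, j). pi_act m j x),
             fbdry = (\<lambda>(x, r). lift_word m x (relator m r)) \<rparr>"

text \<open>1-cell (v, i, c): coordinate i carries the 1-cell [0,1] (c = False) or [1,2]
  (c = True) of C_2, the other coordinates carry the 0-cells given by v; v i = False.
  2-cell (v, i, j, c, d), i < j: coordinates i, j carry the 1-cells c, d.\<close>

definition torus_src :: "(nat \<Rightarrow> bool) \<times> nat \<times> bool \<Rightarrow> (nat \<Rightarrow> bool)" where
  "torus_src = (\<lambda>(v, i, c). if c then v(i := True) else v)"

definition torus_tgt :: "(nat \<Rightarrow> bool) \<times> nat \<times> bool \<Rightarrow> (nat \<Rightarrow> bool)" where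
  "torus_tgt = (\<lambda>(v, i, c). if c then v else v(i := True))"

definition torus_bdry ::
  "(nat \<Rightarrow> bool) \<times> nat \<times> nat \<times> bool \<times> bool \<Rightarrow> (((nat \<Rightarrow> bool) \<times> nat \<times> bool) \<times> bool) list" where
  "torus_bdry = (\<lambda>(v, i, j, c, d).
     [((v(j := d), i, c), True), ((v(i := \<not> c), j, d), True),
      ((v(j := \<not> d), i, c), False), ((v(i := c), j, d), False)])"

definition torus2 :: "nat \<Rightarrow> (nat \<Rightarrow> bool, (nat \<Rightarrow> bool) \<times> nat \<times> bool,
                               (nat \<Rightarrow> bool) \<times> nat \<times> nat \<times> bool \<times> bool) cx2" where
  "torus2 n = \<lparr> verts = Hcube n,
              edges = {(v, i, c). v \<in> Hcube n \<and> 1 \<le> i \<and> i \<le> n \<and> \<not> v i},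
              faces = {(v, i, j, c, d). v \<in> Hcube n \<and> 1 \<le> i \<and> i < j \<and> j \<le> n
                                         \<and> \<not> v i \<and> \<not> v j},
              esrc = torus_src,
              etgt = torus_tgt,
              fbdry = torus_bdry \<rparr>"

end

theory Submission
  imports Defs "HOL-Combinatorics.Transposition"
begin

(*
  Every generator a_j acts on H_(2m+1) by flipping a single coordinate, the coordinate
  depending on the point. Sending a 0-cell x of the cover to x, and the lift of a_j at x to
  the 1-cell of the torus joining x and x.a_j in that coordinate direction, embeds the
  1-skeleton: distinct generators move each point differently. Every relator is a closed
  word of length four whose cyclically consecutive letters are distinct generators, so its
  lift flips coordinates p, q, p, q with p ~= q and runs once around a square 2-cell of the
  torus. Reading the generator labels back along the boundary of that square recovers the
  relator and its base point, so distinct 2-cells are sent to distinct squares.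
*)

lemma flip_apply: "flip c x i = (if i = c then \<not> x c else x i)"
  by (simp add: flip_def)

lemma swapc_apply: "swapc a b x i = (if i = b then x a else if i = a then x b else x i)"
  by (simp add: swapc_def)

lemma flip_flip [simp]: "flip c (flip c x) = x"
  by (rule ext) (simp add: flip_apply)

lemma swapc_swapc [simp]: "swapc a b (swapc a b x) = x"
  by (rule ext) (simp add: swapc_apply)

lemma flip_commute: "flip a (flip b x) = flip b (flip a x)"
  by (rule ext) (auto simp: flip_apply)

lemma swapc_flip_swapc: "swapc a b (flip c (swapc a b x)) = flip (transpose a b c) x"
  by (rule ext) (auto simp: swapc_apply flip_apply transpose_def)

lemma flip_eq_flip_iff [simp]: "flip c x = flip c' x \<longleftrightarrow> c = c'"
  by (metis flip_apply)

lemma flip_in_Hcube: "x \<in> Hcube n \<Longrightarrow> 1 \<le> c \<Longrightarrow> c \<le> n \<Longrightarrow> flip c x \<in> Hcube n"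
  by (auto simp: Hcube_def flip_apply)

lemma flip_cycle4:
  assumes "flip d (flip c (flip b (flip a x))) = x" "a \<noteq> b" "b \<noteq> c" "c \<noteq> d" "d \<noteq> a"
  shows "c = a \<and> d = b"
  using fun_cong[OF assms(1), of a] fun_cong[OF assms(1), of b] assms(2-5)
  by (auto simp: flip_apply split: if_splits)

lemma pi_stage_Suc:
  "pi_stage m (Suc k) j x =
     (if j = Suc (Suc (m+k)) then flip (Suc (Suc (m+k))) x
      else if \<not> x (Suc (Suc (m+k))) then pi_stage m k j x
      else flip (Suc (Suc (m+k))) (swapc (Suc k) (Suc (m+k))
             (pi_stage m k j (swapc (Suc k) (Suc (m+k)) (flip (Suc (Suc (m+k))) x)))))"
  by (simp add: Let_def)

declare pi_stage.simps(2) [simp del]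

lemma pi_stage_fixes_above: "j \<le> m+k+1 \<Longrightarrow> m+k+1 < i \<Longrightarrow> pi_stage m k j x i = x i"
proof (induction k arbitrary: j x i)
  case 0
  then show ?case by (simp add: flip_apply)
next
  case (Suc k)
  then show ?case
    by (cases "j = Suc (Suc (m+k))") (auto simp: pi_stage_Suc flip_apply swapc_apply)
qed

lemma pi_stage_fixes_new_coord [simp]:
  "j \<le> m+k+1 \<Longrightarrow> pi_stage m k j x (Suc (Suc (m+k))) = x (Suc (Suc (m+k)))"
  by (rule pi_stage_fixes_above) auto

text \<open>Stage \<open>k+1\<close> acts on \<open>H\<^sup>*\<^sub>m\<^sub>+\<^sub>k\<close> through the conjugation by \<open>\<beta>\<^sub>m\<^sub>+\<^sub>k\<^sub>+\<^sub>1 \<circ> \<phi>\<^sub>k\<^sub>,\<^sub>m\<^sub>+\<^sub>k\<close>.\<close>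

definition twist :: "nat \<Rightarrow> nat \<Rightarrow> (nat \<Rightarrow> bool) \<Rightarrow> (nat \<Rightarrow> bool)" where
  "twist m k x = swapc (Suc k) (Suc (m+k)) (flip (Suc (Suc (m+k))) x)"

definition untwist :: "nat \<Rightarrow> nat \<Rightarrow> (nat \<Rightarrow> bool) \<Rightarrow> (nat \<Rightarrow> bool)" where
  "untwist m k x = flip (Suc (Suc (m+k))) (swapc (Suc k) (Suc (m+k)) x)"

lemma untwist_twist [simp]: "untwist m k (twist m k x) = x"
  by (simp add: twist_def untwist_def)

lemma twist_untwist [simp]: "twist m k (untwist m k x) = x"
  by (simp add: twist_def untwist_def)

lemma untwist_eq_iff [simp]: "untwist m k x = untwist m k y \<longleftrightarrow> x = y"
  by (metis twist_untwist)

lemma twist_new_coord [simp]: "twist m k x (Suc (Suc (m+k))) = (\<not> x (Suc (Suc (m+k))))"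
  by (simp add: twist_def swapc_apply flip_apply)

lemma untwist_new_coord [simp]: "untwist m k x (Suc (Suc (m+k))) = (\<not> x (Suc (Suc (m+k))))"
  by (simp add: untwist_def swapc_apply flip_apply)

lemma untwist_flip_twist:
  "untwist m k (flip c (twist m k x)) = flip (transpose (Suc k) (Suc (m+k)) c) x"
  by (simp add: twist_def untwist_def flip_commute[of "Suc (Suc (m+k))"] swapc_flip_swapc)

lemma pi_stage_Suc_lower:
  "j \<le> m+k+1 \<Longrightarrow> pi_stage m (Suc k) j x =
     (if x (Suc (Suc (m+k))) then untwist m k (pi_stage m k j (twist m k x)) else pi_stage m k j x)"
  by (simp add: pi_stage_Suc twist_def untwist_def)

lemma pi_stage_involution: "j \<le> m+k+1 \<Longrightarrow> pi_stage m k j (pi_stage m k j x) = x"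
proof (induction k arbitrary: j x)
  case 0
  then show ?case by simp
next
  case (Suc k)
  show ?case
  proof (cases "j = Suc (Suc (m+k))")
    case True
    then show ?thesis by (simp add: pi_stage_Suc)
  next
    case False
    with Suc.prems have "j \<le> m+k+1" by simp
    with Suc.IH show ?thesis by (simp add: pi_stage_Suc_lower)
  qed
qed

lemma pi_stage_is_flip:
  "1 \<le> j \<Longrightarrow> j \<le> m+k+1 \<Longrightarrow> \<exists>c. 1 \<le> c \<and> c \<le> m+k+1 \<and> pi_stage m k j x = flip c x"
proof (induction k arbitrary: j x)
  case 0
  then show ?case by auto
next
  case (Suc k)
  show ?case
  proof (cases "j = Suc (Suc (m+k))")
    case True
    then show ?thesis by (auto simp: pi_stage_Suc)
  next
    case False
    with Suc.prems have j: "j \<le> m+k+1" by simp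
    show ?thesis
    proof (cases "x (Suc (Suc (m+k)))")
      case False
      obtain c where "1 \<le> c" "c \<le> m+k+1" "pi_stage m k j x = flip c x"
        using Suc.IH[OF Suc.prems(1) j] by blast
      with False show ?thesis by (intro exI[of _ c]) (simp add: pi_stage_Suc_lower[OF j])
    next
      case True
      obtain c where c: "1 \<le> c" "c \<le> m+k+1" "pi_stage m k j (twist m k x) = flip c (twist m k x)"
        using Suc.IH[OF Suc.prems(1) j] by blast
      have "pi_stage m (Suc k) j x = flip (transpose (Suc k) (Suc (m+k)) c) x"
        using True c(3) by (simp add: pi_stage_Suc_lower[OF j] untwist_flip_twist)
      moreover have "1 \<le> transpose (Suc k) (Suc (m+k)) c \<and> transpose (Suc k) (Suc (m+k)) c \<le> m + Suc k + 1"
        using c by (auto simp: transpose_def)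
      ultimately show ?thesis by blast
    qed
  qed
qed

lemma pi_stage_distinct:
  "j \<le> m+k+1 \<Longrightarrow> j' \<le> m+k+1 \<Longrightarrow> j \<noteq> j' \<Longrightarrow> pi_stage m k j x \<noteq> pi_stage m k j' x"
proof (induction k arbitrary: j j' x)
  case 0
  then show ?case by (auto simp: fun_eq_iff flip_apply)
next
  case (Suc k)
  let ?n = "Suc (Suc (m+k))"
  have top_differs: "pi_stage m (Suc k) ?n x \<noteq> pi_stage m (Suc k) i x" if "i \<le> m+k+1" for i
  proof -
    have "pi_stage m (Suc k) ?n x ?n \<noteq> x ?n" by (simp add: pi_stage_Suc flip_apply)
    moreover have "pi_stage m (Suc k) i x ?n = x ?n"
      using that by (simp add: pi_stage_Suc_lower[OF that])
    ultimately show ?thesis by metis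
  qed
  show ?case
  proof (cases "j = ?n \<or> j' = ?n")
    case True
    with Suc.prems top_differs show ?thesis by (metis le_SucE add_Suc_right add_Suc)
  next
    case False
    with Suc.prems Suc.IH show ?thesis by (auto simp: pi_stage_Suc_lower)
  qed
qed

lemma pi_stage_top: "pi_stage m k (m+k+1) x = flip (m+k+1) x"
  by (cases k) (simp_all add: pi_stage_Suc)

lemma pi_stage_not_yet_twisted: "k < j \<Longrightarrow> j \<le> m \<Longrightarrow> pi_stage m k j x = flip j x"
proof (induction k arbitrary: x)
  case 0
  then show ?case by simp
next
  case (Suc k)
  then show ?case by (simp add: pi_stage_Suc_lower untwist_flip_twist transpose_def)
qed

lemma pi_stage_commute:
  "1 \<le> i \<Longrightarrow> i \<le> m \<Longrightarrow>
   pi_stage m k i (pi_stage m k (Suc i) x) = pi_stage m k (Suc i) (pi_stage m k i x)"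
proof (induction k arbitrary: x)
  case 0
  then show ?case by (simp add: flip_commute)
next
  case (Suc k)
  then show ?case by (simp add: pi_stage_Suc_lower)
qed

lemma pi_stage_conjugation:
  "1 \<le> j \<Longrightarrow> j \<le> k \<Longrightarrow> k \<le> m \<Longrightarrow>
   pi_stage m k (m+j+1) (pi_stage m k j (pi_stage m k (m+j+1) x)) = pi_stage m k (m+j) x"
proof (induction k arbitrary: x)
  case 0
  then show ?case by simp
next
  case (Suc k)
  show ?case
  proof (cases "j \<le> k")
    case True
    with Suc show ?thesis by (simp add: pi_stage_Suc_lower)
  next
    case False
    with Suc.prems have j: "j = Suc k" by simp
    \<comment> \<open>at stage \<open>k\<close>, \<open>a\<^sub>k\<^sub>+\<^sub>1\<close> and \<open>a\<^sub>m\<^sub>+\<^sub>k\<^sub>+\<^sub>1\<close> are still plain flips, and the twist exchanges their coordinates\<close>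
    have low: "pi_stage m k (Suc k) y = flip (Suc k) y" for y
      using Suc.prems j by (intro pi_stage_not_yet_twisted) auto
    have mid: "pi_stage m k (Suc (m+k)) y = flip (Suc (m+k)) y" for y
      using pi_stage_top[of m k y] by simp
    have top: "pi_stage m (Suc k) (Suc (Suc (m+k))) y = flip (Suc (Suc (m+k))) y" for y
      by (simp add: pi_stage_Suc)
    have new_coord: "flip (Suc (Suc (m+k))) y (Suc (Suc (m+k))) = (\<not> y (Suc (Suc (m+k))))" for y
      by (simp add: flip_apply)
    have "Suc k \<le> m+k+1" "Suc (m+k) \<le> m+k+1" by simp_all
    note old = this[THEN pi_stage_Suc_lower]
    show ?thesis using j
      by (cases "x (Suc (Suc (m+k)))")
        (simp_all add: top old low mid new_coord untwist_flip_twist transpose_def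
          flip_commute[of "Suc (Suc (m+k))"])
  qed
qed

lemma pi_act_involution: "j \<le> 2*m+1 \<Longrightarrow> pi_act m j (pi_act m j x) = x"
  unfolding pi_act_def by (rule pi_stage_involution) simp

lemma pi_act_distinct: "j \<le> 2*m+1 \<Longrightarrow> j' \<le> 2*m+1 \<Longrightarrow> j \<noteq> j' \<Longrightarrow> pi_act m j x \<noteq> pi_act m j' x"
  unfolding pi_act_def by (rule pi_stage_distinct) auto

lemma pi_act_commute:
  "1 \<le> i \<Longrightarrow> i \<le> m \<Longrightarrow> pi_act m i (pi_act m (Suc i) x) = pi_act m (Suc i) (pi_act m i x)"
  unfolding pi_act_def by (rule pi_stage_commute)

lemma pi_act_conjugation:
  "1 \<le> j \<Longrightarrow> j \<le> m \<Longrightarrow> pi_act m (m+j+1) (pi_act m j (pi_act m (m+j+1) x)) = pi_act m (m+j) x"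
  unfolding pi_act_def by (rule pi_stage_conjugation) auto

definition act_coord :: "nat \<Rightarrow> nat \<Rightarrow> (nat \<Rightarrow> bool) \<Rightarrow> nat" where
  "act_coord m j x = (SOME c. 1 \<le> c \<and> c \<le> 2*m+1 \<and> pi_act m j x = flip c x)"

lemma act_coord:
  assumes "1 \<le> j" "j \<le> 2*m+1"
  shows "1 \<le> act_coord m j x" "act_coord m j x \<le> 2*m+1" "pi_act m j x = flip (act_coord m j x) x"
proof -
  have "\<exists>c. 1 \<le> c \<and> c \<le> 2*m+1 \<and> pi_act m j x = flip c x"
    using pi_stage_is_flip[of j m m x] assms by (simp add: pi_act_def mult_2)
  from someI_ex[OF this] show "1 \<le> act_coord m j x" "act_coord m j x \<le> 2*m+1"
    "pi_act m j x = flip (act_coord m j x) x"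
    unfolding act_coord_def by blast+
qed

lemma act_coord_pi_act:
  assumes "1 \<le> j" "j \<le> 2*m+1"
  shows "act_coord m j (pi_act m j x) = act_coord m j x"
proof -
  let ?y = "pi_act m j x"
  have "flip (act_coord m j ?y) ?y = x"
    using act_coord(3)[OF assms, of ?y] pi_act_involution[OF assms(2), of x] by simp
  moreover have "flip (act_coord m j x) ?y = x"
    using act_coord(3)[OF assms, of x] by simp
  ultimately show ?thesis using flip_eq_flip_iff by metis
qed

lemma act_coord_consecutive:
  assumes "1 \<le> j" "j \<le> 2*m+1" "1 \<le> j'" "j' \<le> 2*m+1" "j \<noteq> j'"
  shows "act_coord m j' (pi_act m j x) \<noteq> act_coord m j x"
proof
  assume "act_coord m j' (pi_act m j x) = act_coord m j x"
  then have "pi_act m j' (pi_act m j x) = pi_act m j (pi_act m j x)"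
    using act_coord(3)[OF assms(1,2)] act_coord(3)[OF assms(3,4)] pi_act_involution[OF assms(2)]
    by simp
  then show False using pi_act_distinct[OF assms(4,2)] assms(5) by simp
qed

lemma pi_act_in_Hcube:
  assumes "x \<in> Hcube (2*m+1)" "1 \<le> j" "j \<le> 2*m+1"
  shows "pi_act m j x \<in> Hcube (2*m+1)"
  unfolding act_coord(3)[OF assms(2,3)] by (rule flip_in_Hcube[OF assms(1) act_coord(1,2)[OF assms(2,3)]])

lemma pi_act_inv_eq_pi_act:
  assumes "x \<in> Hcube (2*m+1)" "1 \<le> j" "j \<le> 2*m+1"
  shows "pi_act_inv m j x = pi_act m j x"
  unfolding pi_act_inv_def
proof (rule the_equality)
  show "pi_act m j x \<in> Hcube (2*m+1) \<and> pi_act m j (pi_act m j x) = x"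
    using assms pi_act_in_Hcube pi_act_involution by simp
next
  fix y assume "y \<in> Hcube (2*m+1) \<and> pi_act m j y = x"
  then show "y = pi_act m j x" using pi_act_involution[OF assms(3), of y] by auto
qed

lemma orbit0_subset_Hcube: "orbit0 m \<subseteq> Hcube (2*m+1)"
proof
  fix x assume "x \<in> orbit0 m"
  then have "(zero_tuple, x) \<in> {(x, z). x \<in> Hcube (2*m+1) \<and> z \<in> Hcube (2*m+1) \<and>
      (\<exists>j. 1 \<le> j \<and> j \<le> 2*m+1 \<and> (z = pi_act m j x \<or> x = pi_act m j z))}\<^sup>*"
    by (simp add: orbit0_def)
  then show "x \<in> Hcube (2*m+1)"
    by (induction rule: rtrancl_induct) (auto simp: Hcube_def zero_tuple_def)
qed

lemma pi_act_in_orbit0: "pi_act m j x \<in> orbit0 m" if "x \<in> orbit0 m" "1 \<le> j" "j \<le> 2*m+1"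
proof -
  have "x \<in> Hcube (2*m+1)" "pi_act m j x \<in> Hcube (2*m+1)"
    using that orbit0_subset_Hcube pi_act_in_Hcube by blast+
  with that show ?thesis unfolding orbit0_def by (blast intro: rtrancl_into_rtrancl)
qed

lemma lift_word_Cons:
  "x \<in> Hcube (2*m+1) \<Longrightarrow> 1 \<le> j \<Longrightarrow> j \<le> 2*m+1 \<Longrightarrow>
   lift_word m x ((j, s) # w) = ((if s then x else pi_act m j x, j), s) # lift_word m (pi_act m j x) w"
  by (simp add: pi_act_inv_eq_pi_act Let_def)

lemma length_lift_word [simp]: "length (lift_word m x w) = length w"
  by (induction m x w rule: lift_word.induct) (auto simp: Let_def)

definition map_edges :: "('e \<Rightarrow> 'd) \<Rightarrow> ('e \<times> bool) list \<Rightarrow> ('d \<times> bool) list" where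
  "map_edges f = map (\<lambda>(e, d). (f e, d))"

lemma lift_word_labels: "map_edges snd (lift_word m x w) = w"
  by (induction m x w rule: lift_word.induct) (auto simp: map_edges_def Let_def)

lemma lift_word_edges:
  "x \<in> orbit0 m \<Longrightarrow> \<forall>(j, s) \<in> set w. 1 \<le> j \<and> j \<le> 2*m+1 \<Longrightarrow>
   fst ` set (lift_word m x w) \<subseteq> edges (Khat m)"
proof (induction w arbitrary: x)
  case Nil
  then show ?case by simp
next
  case (Cons a w)
  obtain j s where a: "a = (j, s)" by (cases a)
  with Cons.prems have j: "1 \<le> j" "j \<le> 2*m+1" by auto
  have x: "x \<in> Hcube (2*m+1)" using Cons.prems(1) orbit0_subset_Hcube by blast
  have y: "pi_act m j x \<in> orbit0 m" by (rule pi_act_in_orbit0[OF Cons.prems(1) j])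
  have "fst ` set (lift_word m (pi_act m j x) w) \<subseteq> edges (Khat m)"
    using Cons.IH[OF y] Cons.prems(2) by simp
  moreover have "(if s then x else pi_act m j x, j) \<in> edges (Khat m)"
    using Cons.prems(1) y j by (simp add: Khat_def)
  ultimately show ?case unfolding a lift_word_Cons[OF x j] by simp
qed

text \<open>The 1-cell of the torus leaving \<open>x\<close> in direction \<open>c\<close>, traversed forwards iff \<open>s\<close>:
  it is the cell \<open>[1,2]\<close> exactly when the forward traversal starts at coordinate value 1.\<close>

definition torus_step :: "(nat \<Rightarrow> bool) \<Rightarrow> nat \<Rightarrow> bool \<Rightarrow> ((nat \<Rightarrow> bool) \<times> nat \<times> bool) \<times> bool" where
  "torus_step x c s = ((x(c := False), c, if s then x c else \<not> x c), s)"

definition torus_square_path ::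
  "(nat \<Rightarrow> bool) \<Rightarrow> nat \<Rightarrow> nat \<Rightarrow> bool \<Rightarrow> bool \<Rightarrow> (((nat \<Rightarrow> bool) \<times> nat \<times> bool) \<times> bool) list" where
  "torus_square_path x p q s t =
     [torus_step x p s, torus_step (flip p x) q t,
      torus_step (flip q (flip p x)) p (\<not> s), torus_step (flip p (flip q (flip p x))) q (\<not> t)]"

lemma rotate_4:
  "rotate (Suc 0) [a, b, c, d] = [b, c, d, a]"
  "rotate (Suc (Suc 0)) [a, b, c, d] = [c, d, a, b]"
  "rotate (Suc (Suc (Suc 0))) [a, b, c, d] = [d, a, b, c]"
  by (simp_all add: rotate_def)

lemma torus_square_path_bounds_face:
  assumes "x \<in> Hcube N" "1 \<le> p" "p \<le> N" "1 \<le> q" "q \<le> N" "p \<noteq> q"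
  shows "\<exists>G \<in> faces (torus2 N). \<exists>k. torus_bdry G = rotate k (torus_square_path x p q s t) \<or>
           torus_bdry G = rotate k (rev_path (torus_square_path x p q s t))"
proof -
  let ?P = "torus_square_path x p q s t"
  let ?cp = "if s then x p else \<not> x p" and ?cq = "if t then x q else \<not> x q"
  note unfold_square = torus_square_path_def torus_step_def torus_bdry_def rev_path_def rotate_4
    numeral_eq_Suc flip_def fun_upd_twist fun_upd_idem
  show ?thesis
  proof (cases "p < q")
    case True
    let ?G = "(x(p := False, q := False), p, q, ?cp, ?cq)"
    have "?G \<in> faces (torus2 N)" using assms True by (auto simp: torus2_def Hcube_def)
    moreover have "torus_bdry ?G = rotate (if s then 0 else 2) ?P" if "t = s"
      using True that by (cases s) (simp_all add: unfold_square)
    moreover have "torus_bdry ?G = rotate (if s then 1 else 3) (rev_path ?P)" if "t = (\<not> s)"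
      using True that by (cases s) (simp_all add: unfold_square)
    ultimately show ?thesis by blast
  next
    case False
    with assms(6) have "q < p" by simp
    let ?G = "(x(p := False, q := False), q, p, ?cq, ?cp)"
    have "?G \<in> faces (torus2 N)" using assms \<open>q < p\<close> by (auto simp: torus2_def Hcube_def)
    moreover have "torus_bdry ?G = rotate (if s then 0 else 2) (rev_path ?P)" if "t = s"
      using \<open>q < p\<close> that by (cases s) (simp_all add: unfold_square)
    moreover have "torus_bdry ?G = rotate (if s then 3 else 1) ?P" if "t = (\<not> s)"
      using \<open>q < p\<close> that by (cases s) (simp_all add: unfold_square)
    ultimately show ?thesis by blast
  qed
qed

definition edge_map :: "nat \<Rightarrow> (nat \<Rightarrow> bool) \<times> nat \<Rightarrow> (nat \<Rightarrow> bool) \<times> nat \<times> bool" where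
  "edge_map m = (\<lambda>(y, j). (y(act_coord m j y := False), act_coord m j y, y (act_coord m j y)))"

lemma map_edges_lift_word_Cons:
  assumes "x \<in> Hcube (2*m+1)" "1 \<le> j" "j \<le> 2*m+1"
  shows "map_edges (edge_map m) (lift_word m x ((j, s) # w)) =
    torus_step x (act_coord m j x) s # map_edges (edge_map m) (lift_word m (pi_act m j x) w)"
proof -
  let ?c = "act_coord m j x"
  have y: "pi_act m j x = flip ?c x" by (rule act_coord(3)[OF assms(2,3)])
  have c: "act_coord m j (pi_act m j x) = ?c" by (rule act_coord_pi_act[OF assms(2,3)])
  have "edge_map m (pi_act m j x, j) = ((flip ?c x)(?c := False), ?c, flip ?c x ?c)"
    by (simp only: edge_map_def c prod.case) (simp only: y)
  then have backward: "edge_map m (pi_act m j x, j) = (x(?c := False), ?c, \<not> x ?c)"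
    by (simp add: flip_def)
  have forward: "edge_map m (x, j) = (x(?c := False), ?c, x ?c)"
    by (simp add: edge_map_def)
  show ?thesis unfolding lift_word_Cons[OF assms] map_edges_def
    by (cases s) (simp_all add: forward backward torus_step_def)
qed

lemma act_coord_square:
  assumes j: "\<forall>j \<in> {j0, j1, j2, j3}. 1 \<le> j \<and> j \<le> 2*m+1"
    and distinct: "j0 \<noteq> j1" "j1 \<noteq> j2" "j2 \<noteq> j3" "j3 \<noteq> j0"
    and closed: "pi_act m j3 (pi_act m j2 (pi_act m j1 (pi_act m j0 x))) = x"
  shows "act_coord m j1 (pi_act m j0 x) \<noteq> act_coord m j0 x"
    "act_coord m j2 (pi_act m j1 (pi_act m j0 x)) = act_coord m j0 x"
    "act_coord m j3 (pi_act m j2 (pi_act m j1 (pi_act m j0 x))) = act_coord m j1 (pi_act m j0 x)"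
proof -
  define u1 where "u1 = pi_act m j0 x"
  define u2 where "u2 = pi_act m j1 u1"
  define u3 where "u3 = pi_act m j2 u2"
  from j have j0: "1 \<le> j0" "j0 \<le> 2*m+1" and j1: "1 \<le> j1" "j1 \<le> 2*m+1"
    and j2: "1 \<le> j2" "j2 \<le> 2*m+1" and j3: "1 \<le> j3" "j3 \<le> 2*m+1" by auto
  define c0 where "c0 = act_coord m j0 x"
  define c1 where "c1 = act_coord m j1 u1"
  define c2 where "c2 = act_coord m j2 u2"
  define c3 where "c3 = act_coord m j3 u3"
  have x_u3: "x = pi_act m j3 u3" using closed by (simp add: u1_def u2_def u3_def)
  have "u1 = flip c0 x" unfolding u1_def c0_def by (rule act_coord(3)[OF j0])
  moreover have "u2 = flip c1 u1" unfolding u2_def c1_def by (rule act_coord(3)[OF j1])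
  moreover have "u3 = flip c2 u2" unfolding u3_def c2_def by (rule act_coord(3)[OF j2])
  moreover have "x = flip c3 u3" unfolding c3_def x_u3 by (rule act_coord(3)[OF j3])
  ultimately have "flip c3 (flip c2 (flip c1 (flip c0 x))) = x" by simp
  moreover have "c0 \<noteq> c1" "c1 \<noteq> c2" "c2 \<noteq> c3"
    using act_coord_consecutive[OF j0 j1 distinct(1), of x] act_coord_consecutive[OF j1 j2 distinct(2), of u1]
      act_coord_consecutive[OF j2 j3 distinct(3), of u2]
    by (auto simp: c0_def c1_def c2_def c3_def u1_def u2_def u3_def)
  moreover have "c3 \<noteq> c0"
    using act_coord_consecutive[OF j3 j0 distinct(4), of u3] by (simp add: c0_def c3_def x_u3[symmetric])
  ultimately have "c1 \<noteq> c0" "c2 = c0" "c3 = c1" using flip_cycle4 by metis+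
  then show "act_coord m j1 (pi_act m j0 x) \<noteq> act_coord m j0 x"
    "act_coord m j2 (pi_act m j1 (pi_act m j0 x)) = act_coord m j0 x"
    "act_coord m j3 (pi_act m j2 (pi_act m j1 (pi_act m j0 x))) = act_coord m j1 (pi_act m j0 x)"
    by (simp_all add: c0_def c1_def c2_def c3_def u1_def u2_def u3_def)
qed

lemma map_edges_lift_square_word:
  assumes x: "x \<in> Hcube (2*m+1)"
    and j: "\<forall>j \<in> {j0, j1, j2, j3}. 1 \<le> j \<and> j \<le> 2*m+1"
    and distinct: "j0 \<noteq> j1" "j1 \<noteq> j2" "j2 \<noteq> j3" "j3 \<noteq> j0"
    and closed: "pi_act m j3 (pi_act m j2 (pi_act m j1 (pi_act m j0 x))) = x"
  shows "\<exists>p q. 1 \<le> p \<and> p \<le> 2*m+1 \<and> 1 \<le> q \<and> q \<le> 2*m+1 \<and> p \<noteq> q \<and>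
    map_edges (edge_map m) (lift_word m x [(j0, s), (j1, t), (j2, \<not> s), (j3, \<not> t)]) =
    torus_square_path x p q s t"
proof -
  from j have j0: "1 \<le> j0" "j0 \<le> 2*m+1" and j1: "1 \<le> j1" "j1 \<le> 2*m+1"
    and j2: "1 \<le> j2" "j2 \<le> 2*m+1" and j3: "1 \<le> j3" "j3 \<le> 2*m+1" by auto
  define u1 where "u1 = pi_act m j0 x"
  define u2 where "u2 = pi_act m j1 u1"
  define u3 where "u3 = pi_act m j2 u2"
  define p where "p = act_coord m j0 x"
  define q where "q = act_coord m j1 u1"
  have u1: "u1 \<in> Hcube (2*m+1)" unfolding u1_def by (rule pi_act_in_Hcube[OF x j0])
  have u2: "u2 \<in> Hcube (2*m+1)" unfolding u2_def by (rule pi_act_in_Hcube[OF u1 j1])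
  have u3: "u3 \<in> Hcube (2*m+1)" unfolding u3_def by (rule pi_act_in_Hcube[OF u2 j2])
  note square = act_coord_square[OF j distinct closed, folded u1_def u2_def u3_def p_def q_def]
  have nil: "map_edges (edge_map m) (lift_word m u []) = []" for u by (simp add: map_edges_def)
  have "map_edges (edge_map m) (lift_word m x [(j0, s), (j1, t), (j2, \<not> s), (j3, \<not> t)]) =
      [torus_step x p s, torus_step u1 q t, torus_step u2 p (\<not> s), torus_step u3 q (\<not> t)]"
    by (simp only: map_edges_lift_word_Cons[OF x j0] map_edges_lift_word_Cons[OF u1 j1]
      map_edges_lift_word_Cons[OF u2 j2] map_edges_lift_word_Cons[OF u3 j3] nil
      u1_def[symmetric] u2_def[symmetric] u3_def[symmetric] p_def[symmetric] q_def[symmetric] square(2,3))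
  also have "\<dots> = torus_square_path x p q s t"
    using act_coord(3)[OF j0, of x] act_coord(3)[OF j1, of u1] act_coord(3)[OF j2, of u2] square(2)
    by (simp add: torus_square_path_def u1_def u2_def u3_def p_def q_def)
  finally have "map_edges (edge_map m) (lift_word m x [(j0, s), (j1, t), (j2, \<not> s), (j3, \<not> t)]) =
    torus_square_path x p q s t" .
  moreover have "1 \<le> p" "p \<le> 2*m+1" "1 \<le> q" "q \<le> 2*m+1" "p \<noteq> q"
    using square(1) act_coord(1,2)[OF j0, of x] act_coord(1,2)[OF j1, of u1] by (auto simp: p_def q_def)
  ultimately show ?thesis by blast
qed

lemma relator_square:
  assumes "1 \<le> r" "r \<le> 2*m"
  obtains j0 j1 j2 j3 s t where
    "relator m r = [(j0, s), (j1, t), (j2, \<not> s), (j3, \<not> t)]"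
    "\<forall>j \<in> {j0, j1, j2, j3}. 1 \<le> j \<and> j \<le> 2*m+1"
    "j0 \<noteq> j1" "j1 \<noteq> j2" "j2 \<noteq> j3" "j3 \<noteq> j0"
    "\<And>x. pi_act m j3 (pi_act m j2 (pi_act m j1 (pi_act m j0 x))) = x"
proof (cases "r \<le> m")
  case True
  have closed: "pi_act m (Suc r) (pi_act m r (pi_act m (Suc r) (pi_act m r x))) = x" for x
    using pi_act_commute[OF assms(1) True] pi_act_involution[of r m] pi_act_involution[of "Suc r" m] True
    by simp
  show ?thesis
  proof (rule that)
    show "relator m r = [(r, False), (Suc r, False), (r, \<not> False), (Suc r, \<not> False)]"
      using True by (simp add: relator_def)
  qed (use True assms closed in auto)
next
  case False
  define j where "j = r - m"
  with False assms have j: "1 \<le> j" "j \<le> m" "r = m + j" by auto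
  have closed: "pi_act m (m+j) (pi_act m (m+j+1) (pi_act m j (pi_act m (m+j+1) x))) = x" for x
    using pi_act_conjugation[OF j(1,2)] pi_act_involution[of "m+j" m] j by simp
  show ?thesis
  proof (rule that)
    show "relator m r = [(m+j+1, False), (j, True), (m+j+1, \<not> False), (m+j, \<not> True)]"
      using False j by (simp add: relator_def Let_def)
  qed (use j closed in auto)
qed

lemma length_relator: "length (relator m r) = 4"
  by (simp add: relator_def Let_def)

lemma relator_letters: "1 \<le> r \<Longrightarrow> r \<le> 2*m \<Longrightarrow> \<forall>(j, s) \<in> set (relator m r). 1 \<le> j \<and> j \<le> 2*m+1"
  by (auto simp: relator_def Let_def)

lemma fbdry_Khat: "fbdry (Khat m) (x, r) = lift_word m x (relator m r)"
  by (simp add: Khat_def)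

definition face_path :: "nat \<Rightarrow> (nat \<Rightarrow> bool) \<times> nat \<Rightarrow> (((nat \<Rightarrow> bool) \<times> nat \<times> bool) \<times> bool) list" where
  "face_path m F = map_edges (edge_map m) (fbdry (Khat m) F)"

lemma face_path_bounds_face:
  assumes "F \<in> faces (Khat m)"
  shows "\<exists>G \<in> faces (torus2 (2*m+1)). \<exists>k.
    torus_bdry G = rotate k (face_path m F) \<or> torus_bdry G = rotate k (rev_path (face_path m F))"
proof -
  obtain x r where F: "F = (x, r)" and x: "x \<in> orbit0 m" and r: "1 \<le> r" "r \<le> 2*m"
    using assms by (auto simp: Khat_def)
  have xH: "x \<in> Hcube (2*m+1)" using x orbit0_subset_Hcube by blast
  obtain j0 j1 j2 j3 s t where rel: "relator m r = [(j0, s), (j1, t), (j2, \<not> s), (j3, \<not> t)]"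
    and square: "\<forall>j \<in> {j0, j1, j2, j3}. 1 \<le> j \<and> j \<le> 2*m+1"
      "j0 \<noteq> j1" "j1 \<noteq> j2" "j2 \<noteq> j3" "j3 \<noteq> j0"
      "\<And>x. pi_act m j3 (pi_act m j2 (pi_act m j1 (pi_act m j0 x))) = x"
    using relator_square[OF r] by metis
  have "face_path m F = map_edges (edge_map m) (lift_word m x [(j0, s), (j1, t), (j2, \<not> s), (j3, \<not> t)])"
    by (simp add: face_path_def F Khat_def rel)
  with map_edges_lift_square_word[OF xH square] obtain p q where
    "1 \<le> p" "p \<le> 2*m+1" "1 \<le> q" "q \<le> 2*m+1" "p \<noteq> q" "face_path m F = torus_square_path x p q s t"
    by metis
  with torus_square_path_bounds_face[OF xH] show ?thesis by simp
qed

definition face_map :: "nat \<Rightarrow> (nat \<Rightarrow> bool) \<times> nat \<Rightarrow> (nat \<Rightarrow> bool) \<times> nat \<times> nat \<times> bool \<times> bool" where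
  "face_map m F = (SOME G. G \<in> faces (torus2 (2*m+1)) \<and> (\<exists>k.
     torus_bdry G = rotate k (face_path m F) \<or> torus_bdry G = rotate k (rev_path (face_path m F))))"

lemma face_map:
  assumes "F \<in> faces (Khat m)"
  shows "face_map m F \<in> faces (torus2 (2*m+1))"
    "\<exists>k. torus_bdry (face_map m F) = rotate k (face_path m F) \<or>
         torus_bdry (face_map m F) = rotate k (rev_path (face_path m F))"
  using someI_ex[OF face_path_bounds_face[OF assms, unfolded Bex_def]]
  unfolding face_map_def by blast+

definition orient :: "bool \<Rightarrow> ('e \<times> bool) list \<Rightarrow> ('e \<times> bool) list" where
  "orient b P = (if b then P else rev_path P)"

lemma face_map_orient:
  assumes "F \<in> faces (Khat m)"
  obtains k b where "torus_bdry (face_map m F) = rotate k (orient b (face_path m F))"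
proof -
  from face_map(2)[OF assms] obtain k where "torus_bdry (face_map m F) = rotate k (face_path m F) \<or>
      torus_bdry (face_map m F) = rotate k (rev_path (face_path m F))" ..
  then show ?thesis using that[of k True] that[of k False] by (auto simp: orient_def)
qed

lemma map_edges_orient: "map_edges f (orient b P) = orient b (map_edges f P)"
  by (cases b) (simp_all add: orient_def map_edges_def rev_path_def rev_map split_def)

lemma map_edges_rotate: "map_edges f (rotate k P) = rotate k (map_edges f P)"
  by (simp add: map_edges_def rotate_map)

lemma rev_path_rev_path [simp]: "rev_path (rev_path P) = P"
  by (induction P) (auto simp: rev_path_def)

lemma orient_eq_orient_iff [simp]: "orient b P = orient b Q \<longleftrightarrow> P = Q"
  by (metis orient_def rev_path_rev_path)

lemma length_orient [simp]: "length (orient b P) = length P"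
  by (simp add: orient_def rev_path_def)

lemma rotate_eq_rotate_imp:
  assumes "rotate k X = rotate k' Y" "length X = length Y" "0 < length X"
  shows "\<exists>t < length X. X = rotate t Y"
proof -
  let ?n = "length X"
  have "k mod ?n \<le> ?n" using assms(3) by (simp add: mod_le_divisor)
  then have "?n - k mod ?n + k = ?n + k div ?n * ?n" using div_mult_mod_eq[of k ?n] by linarith
  then have "(?n - k mod ?n + k) mod ?n = 0" by simp
  then have "X = rotate (?n - k mod ?n) (rotate k X)"
    by (metis rotate_conv_mod rotate_rotate rotate0 id_apply)
  also have "\<dots> = rotate ((?n - k mod ?n + k') mod ?n) Y"
    using assms(1,2) by (simp add: rotate_rotate rotate_conv_mod[of "_ + _"])
  finally show ?thesis using assms(3) by (intro exI[of _ "(?n - k mod ?n + k') mod ?n"]) simp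
qed

lemma relator_orient_rotate:
  assumes "1 \<le> r" "r \<le> 2*m" "1 \<le> r'" "r' \<le> 2*m" "t < 4"
    and "orient b (relator m r) = rotate t (orient b' (relator m r'))"
  shows "r = r' \<and> b = b' \<and> t = 0"
proof -
  have "t = 0 \<or> t = Suc 0 \<or> t = Suc (Suc 0) \<or> t = Suc (Suc (Suc 0))" using assms(5) by auto
  with assms(1-4,6) show ?thesis
    by (cases b; cases b') (auto simp: relator_def orient_def rev_path_def Let_def rotate_4 split: if_splits)
qed

definition edge_label :: "nat \<Rightarrow> (nat \<Rightarrow> bool) \<times> nat \<times> bool \<Rightarrow> nat" where
  "edge_label m d = snd (inv_into (edges (Khat m)) (edge_map m) d)"

lemma inj_on_edge_map: "inj_on (edge_map m) (edges (Khat m))"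
proof (rule inj_onI)
  fix e e' assume "e \<in> edges (Khat m)" "e' \<in> edges (Khat m)" and eq: "edge_map m e = edge_map m e'"
  then obtain y j y' j' where e: "e = (y, j)" "e' = (y', j')"
    and j: "1 \<le> j" "j \<le> 2*m+1" and j': "1 \<le> j'" "j' \<le> 2*m+1"
    by (auto simp: Khat_def)
  let ?c = "act_coord m j y" and ?c' = "act_coord m j' y'"
  from eq[unfolded e edge_map_def prod.case prod.inject]
  have c: "?c = ?c'" and upd: "y(?c := False) = y'(?c' := False)" and val: "y ?c = y' ?c'"
    by blast+
  have "y = y'"
  proof
    fix i show "y i = y' i" using fun_cong[OF upd, of i] val c by (auto split: if_splits)
  qed
  then have "pi_act m j y = pi_act m j' y"
    using act_coord(3)[OF j, of y] act_coord(3)[OF j', of y'] c by simp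
  then have "j = j'" using pi_act_distinct[OF j(2) j'(2)] by blast
  with e \<open>y = y'\<close> show "e = e'" by simp
qed

lemma map_edges_edge_label:
  assumes "fst ` set L \<subseteq> edges (Khat m)"
  shows "map_edges (edge_label m) (map_edges (edge_map m) L) = map_edges snd L"
  unfolding map_edges_def map_map
proof (rule map_cong)
  fix a assume "a \<in> set L"
  with assms have "fst a \<in> edges (Khat m)" by blast
  then show "((\<lambda>(e, d). (edge_label m e, d)) \<circ> (\<lambda>(e, d). (edge_map m e, d))) a = (\<lambda>(e, d). (snd e, d)) a"
    by (auto simp: edge_label_def inv_into_f_f[OF inj_on_edge_map] split: prod.splits)
qed simp

lemma face_path_labels:
  assumes "(x, r) \<in> faces (Khat m)"
  shows "map_edges (edge_label m) (face_path m (x, r)) = relator m r"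
proof -
  from assms have "x \<in> orbit0 m" "1 \<le> r" "r \<le> 2*m" by (auto simp: Khat_def)
  then have "fst ` set (lift_word m x (relator m r)) \<subseteq> edges (Khat m)"
    using lift_word_edges relator_letters by blast
  then show ?thesis by (simp add: face_path_def fbdry_Khat map_edges_edge_label lift_word_labels)
qed

lemma torus_step_eq_imp_eq:
  assumes "torus_step x c s = torus_step x' c' s'"
  shows "x = x'"
proof
  fix i
  from assms[unfolded torus_step_def prod.inject] have "x(c := False) = x'(c := False)" "s = s'" "c = c'"
    "(if s then x c else \<not> x c) = (if s then x' c else \<not> x' c)"
    by blast+
  then show "x i = x' i" by (cases "i = c") (auto dest: fun_cong[of _ _ i] split: if_splits)
qed

lemma face_path_determines_vertex:
  assumes "(x, r) \<in> faces (Khat m)" "(x', r) \<in> faces (Khat m)"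
    and "face_path m (x, r) = face_path m (x', r)"
  shows "x = x'"
proof -
  from assms(1,2) have x: "x \<in> Hcube (2*m+1)" "x' \<in> Hcube (2*m+1)" and r: "1 \<le> r" "r \<le> 2*m"
    using orbit0_subset_Hcube by (auto simp: Khat_def)
  obtain j s w where rel: "relator m r = (j, s) # w"
    using length_relator[of m r] by (cases "relator m r") auto
  with relator_letters[OF r] have j: "1 \<le> j" "j \<le> 2*m+1" by auto
  from assms(3) have "torus_step x (act_coord m j x) s = torus_step x' (act_coord m j x') s"
    unfolding face_path_def fbdry_Khat rel map_edges_lift_word_Cons[OF x(1) j]
      map_edges_lift_word_Cons[OF x(2) j] by simp
  then show ?thesis by (rule torus_step_eq_imp_eq)
qed

lemma inj_on_face_map: "inj_on (face_map m) (faces (Khat m))"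
proof (rule inj_onI)
  fix F F' assume F: "F \<in> faces (Khat m)" and F': "F' \<in> faces (Khat m)"
    and eq: "face_map m F = face_map m F'"
  obtain x r x' r' where FF': "F = (x, r)" "F' = (x', r')"
    and r: "1 \<le> r" "r \<le> 2*m" and r': "1 \<le> r'" "r' \<le> 2*m"
    using F F' by (auto simp: Khat_def)
  let ?P = "face_path m F" and ?P' = "face_path m F'"
  have len: "length ?P = 4" "length ?P' = 4"
    by (simp_all add: face_path_def map_edges_def Khat_def FF' length_relator)
  obtain k b k' b' where "torus_bdry (face_map m F) = rotate k (orient b ?P)"
    "torus_bdry (face_map m F') = rotate k' (orient b' ?P')"
    using face_map_orient[OF F] face_map_orient[OF F'] by metis
  with eq have "rotate k (orient b ?P) = rotate k' (orient b' ?P')" by simp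
  with len obtain t where "t < 4" and P: "orient b ?P = rotate t (orient b' ?P')"
    using rotate_eq_rotate_imp[of k "orient b ?P" k' "orient b' ?P'"] by auto
  have "orient b (relator m r) = map_edges (edge_label m) (orient b ?P)"
    using face_path_labels F by (simp add: map_edges_orient FF')
  also have "\<dots> = rotate t (orient b' (relator m r'))"
    unfolding P using face_path_labels F' by (simp add: map_edges_orient map_edges_rotate FF')
  finally have "orient b (relator m r) = rotate t (orient b' (relator m r'))" .
  with r r' \<open>t < 4\<close> have "r = r'" "b = b'" "t = 0" using relator_orient_rotate by blast+
  with P have "face_path m (x, r) = face_path m (x', r)" by (simp add: FF')
  with F F' have "x = x'" using face_path_determines_vertex \<open>r = r'\<close> FF' by blast
  with FF' \<open>r = r'\<close> show "F = F'" by simp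
qed

lemma edge_map_in_torus:
  assumes "e \<in> edges (Khat m)"
  shows "edge_map m e \<in> edges (torus2 (2*m+1))"
    "torus_src (edge_map m e) = esrc (Khat m) e" "torus_tgt (edge_map m e) = etgt (Khat m) e"
proof -
  obtain y j where e: "e = (y, j)" and y: "y \<in> Hcube (2*m+1)" and j: "1 \<le> j" "j \<le> 2*m+1"
    using assms orbit0_subset_Hcube by (auto simp: Khat_def)
  show "edge_map m e \<in> edges (torus2 (2*m+1))"
    using y act_coord(1,2)[OF j, of y] by (auto simp: e edge_map_def torus2_def Hcube_def)
  show "torus_src (edge_map m e) = esrc (Khat m) e" "torus_tgt (edge_map m e) = etgt (Khat m) e"
    using act_coord(3)[OF j, of y]
    by (auto simp: e edge_map_def Khat_def torus_src_def torus_tgt_def flip_def fun_upd_idem_iff)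
qed

theorem proposition6p2:
  fixes m :: nat
  assumes "m \<ge> 1"
  shows "cellularly_embeds (Khat m) (torus2 (2*m+1))"
proof -
  have "verts (Khat m) \<subseteq> verts (torus2 (2*m+1))"
    using orbit0_subset_Hcube by (simp add: Khat_def torus2_def)
  moreover have "\<forall>e \<in> edges (Khat m). edge_map m e \<in> edges (torus2 (2*m+1)) \<and>
      esrc (torus2 (2*m+1)) (edge_map m e) = esrc (Khat m) e \<and>
      etgt (torus2 (2*m+1)) (edge_map m e) = etgt (Khat m) e"
    using edge_map_in_torus by (simp add: torus2_def)
  moreover have "\<forall>F \<in> faces (Khat m). face_map m F \<in> faces (torus2 (2*m+1)) \<and> (\<exists>k.
      fbdry (torus2 (2*m+1)) (face_map m F) = rotate k (map_edges (edge_map m) (fbdry (Khat m) F)) \<or>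
      fbdry (torus2 (2*m+1)) (face_map m F) = rotate k (rev_path (map_edges (edge_map m) (fbdry (Khat m) F))))"
    using face_map by (simp add: torus2_def face_path_def)
  ultimately have "cellular_embedding (Khat m) (torus2 (2*m+1)) id (edge_map m) (face_map m) (\<lambda>_. True)"
    unfolding cellular_embedding_def map_edges_def using inj_on_edge_map inj_on_face_map by auto
  then show ?thesis unfolding cellularly_embeds_def by blast
qed

end
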